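(* Fix integers $m\ge 1$ and $\theta\in(0,1]$, and let $f$ be a homogeneous voting rule. Suppose there is a neighborhood $U$ of the expected normalized profile $\hat P$ (in the space of normalized continuous profiles on candidates $\{1,\dots,m\}$, with the topology of weight vectors in $\mathbb R^{m!}$) such that $f$ is not CM in any continuous profile of $U$. Then $\lim_{n\to\infty}\rho(f,m,n,\theta)=0$.
   Context: A ranking over a finite candidate set is a strict total order on it. A discrete profile $P$ consists of a finite nonempty candidate set, a finite nonempty voter set of size $n$, and a ranking $P_v$ for each voter $v$; $w(p,P)$ is the number of voters with ranking $p$, $w(P)=n$. A continuous profile consists of a candidate set, a total weight $w(P)>0$ and weights $w(p,P)\ge0$ for each ranking $p$ summing to $w(P)$. The normalized profile $\bar P$ has weights $w(p,P)/w(P)$. Profiles on a fixed candidate set are identified with their weight vectors in $\mathbb R^{m!}$. A voting rule maps every profile (discrete or continuous) to one of its candidates; it is homogeneous if $f(P)=f(\bar P)$ always. CM (discrete): $f$ is CM in discrete $P$ if there is a discrete $Q$ with the same candidates and voters, $f(Q)\ne f(P)$, and every voter $v$ with $Q_v\ne P_v$ prefers $f(Q)$ to $f(P)$ according to $P_v$. CM (continuous): $f$ is CM in continuous $P$ if there is a continuous $Q$ with the same candidates and total weight, $f(Q)\ne f(P)$, and every ranking $p$ with $w(p,Q)<w(p,P)$ prefers $f(Q)$ to $f(P)$. Perturbed Culture with parameters $m,n\ge1$ and $\theta\in(0,1]$: a random discrete profile with candidates $\{1,\dots,m\}$ and voters $\{1,\dots,n\}$, where each voter independently has ranking $1\succ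 2\succ\cdots\succ m$ with probability $\theta$ and a uniformly random ranking with probability $1-\theta$. The expected normalized profile $\hat P$ is the continuous profile of total weight $1$ in which $1\succ\cdots\succ m$ has weight $\theta+\frac{1-\theta}{m!}$ and every other ranking has weight $\frac{1-\theta}{m!}$. The CM rate $\rho(f,m,n,\theta)$ is the probability that $f$ is CM in a profile drawn from this model. *)

theory Defs
  imports "HOL-Analysis.Analysis" "HOL-Combinatorics.Multiset_Permutations"
begin

text \<open>Candidates are 1,...,m. A ranking is a list enumerating all candidates without
repetition, best first.\<close>

definition rankings :: "nat \<Rightarrow> nat list set" where
  "rankings m = permutations_of_set {1..m}"

definition prefers :: "nat list \<Rightarrow> nat \<Rightarrow> nat \<Rightarrow> bool" where
  "prefers p a b \<longleftrightarrow> (\<exists>i j. i < j \<and> j < length p \<and> p ! i = a \<and> p ! j = b)"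

definition discrete_profile :: "nat \<Rightarrow> nat \<Rightarrow> nat list list \<Rightarrow> bool" where
  "discrete_profile m n P \<longleftrightarrow> length P = n \<and> n \<ge> 1 \<and> (\<forall>v<n. P ! v \<in> rankings m)"

definition total_weight :: "nat \<Rightarrow> (nat list \<Rightarrow> real) \<Rightarrow> real" where
  "total_weight m w = (\<Sum>p\<in>rankings m. w p)"

definition cont_profile :: "nat \<Rightarrow> (nat list \<Rightarrow> real) \<Rightarrow> bool" where
  "cont_profile m w \<longleftrightarrow> (\<forall>p. w p \<ge> 0) \<and> (\<forall>p. p \<notin> rankings m \<longrightarrow> w p = 0)
     \<and> total_weight m w > 0"

definition normalize :: "nat \<Rightarrow> (nat list \<Rightarrow> real) \<Rightarrow> (nat list \<Rightarrow> real)" where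
  "normalize m w = (\<lambda>p. w p / total_weight m w)"

definition disc_weights :: "nat list list \<Rightarrow> (nat list \<Rightarrow> real)" where
  "disc_weights P = (\<lambda>p. real (card {v. v < length P \<and> P ! v = p}))"

definition voting_rule :: "nat \<Rightarrow> (nat list list \<Rightarrow> nat) \<Rightarrow> ((nat list \<Rightarrow> real) \<Rightarrow> nat) \<Rightarrow> bool" where
  "voting_rule m fd fc \<longleftrightarrow>
     (\<forall>n P. discrete_profile m n P \<longrightarrow> fd P \<in> {1..m}) \<and>
     (\<forall>w. cont_profile m w \<longrightarrow> fc w \<in> {1..m})"

definition homogeneous :: "nat \<Rightarrow> (nat list list \<Rightarrow> nat) \<Rightarrow> ((nat list \<Rightarrow> real) \<Rightarrow> nat) \<Rightarrow> bool" where
  "homogeneous m fd fc \<longleftrightarrow>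
     (\<forall>n P. discrete_profile m n P \<longrightarrow> fd P = fc (normalize m (disc_weights P))) \<and>
     (\<forall>w. cont_profile m w \<longrightarrow> fc w = fc (normalize m w))"

definition CM_disc :: "nat \<Rightarrow> (nat list list \<Rightarrow> nat) \<Rightarrow> nat list list \<Rightarrow> bool" where
  "CM_disc m fd P \<longleftrightarrow> (\<exists>Q. discrete_profile m (length P) Q \<and> fd Q \<noteq> fd P \<and>
     (\<forall>v < length P. Q ! v \<noteq> P ! v \<longrightarrow> prefers (P ! v) (fd Q) (fd P)))"

definition CM_cont :: "nat \<Rightarrow> ((nat list \<Rightarrow> real) \<Rightarrow> nat) \<Rightarrow> (nat list \<Rightarrow> real) \<Rightarrow> bool" where
  "CM_cont m fc w \<longleftrightarrow> (\<exists>q. cont_profile m q \<and> total_weight m q = total_weight m w \<and>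
     fc q \<noteq> fc w \<and>
     (\<forall>p\<in>rankings m. q p < w p \<longrightarrow> prefers p (fc q) (fc w)))"

definition pc_weight :: "nat \<Rightarrow> real \<Rightarrow> nat list \<Rightarrow> real" where
  "pc_weight m \<theta> p = (if p \<in> rankings m then
      (if p = [1..<m+1] then \<theta> else 0) + (1 - \<theta>) / fact m else 0)"

definition expected_profile :: "nat \<Rightarrow> real \<Rightarrow> (nat list \<Rightarrow> real)" where
  "expected_profile m \<theta> = pc_weight m \<theta>"

definition CM_rate :: "(nat list list \<Rightarrow> nat) \<Rightarrow> nat \<Rightarrow> nat \<Rightarrow> real \<Rightarrow> real" where
  "CM_rate fd m n \<theta> =
     (\<Sum>P\<in>{P. discrete_profile m n P \<and> CM_disc m fd P}. \<Prod>v<n. pc_weight m \<theta> (P ! v))"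

end

theory Submission
  imports Defs
begin

text \<open>If a discrete profile P is manipulable, then by homogeneity so is its normalization, a
continuous profile of total weight 1; hence some ranking p has empirical frequency at distance at
least \<open>\<epsilon>\<close> from its weight in \<open>\<hat>P\<close>. The n voters are independent, so by Chebyshev's
inequality this happens for a fixed p with probability at most \<open>1/(n\<epsilon>\<^sup>2)\<close>, and a union
bound over the m! rankings gives \<open>\<rho>(f,m,n,\<theta>) \<le> m!/(n\<epsilon>\<^sup>2) \<longrightarrow> 0\<close>.\<close>

definition iid_expectation :: "'a set \<Rightarrow> ('a \<Rightarrow> real) \<Rightarrow> nat \<Rightarrow> ('a list \<Rightarrow> real) \<Rightarrow> real" where
  "iid_expectation R \<pi> n g = (\<Sum>xs | set xs \<subseteq> R \<and> length xs = n. prod_list (map \<pi> xs) * g xs)"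

lemma iid_expectation_0 [simp]: "iid_expectation R \<pi> 0 g = g []"
proof -
  have "{xs. set xs \<subseteq> R \<and> length xs = 0} = {[]}" by auto
  then show ?thesis by (simp add: iid_expectation_def)
qed

lemma iid_expectation_Suc:
  assumes "finite R"
  shows "iid_expectation R \<pi> (Suc n) g = (\<Sum>x\<in>R. \<pi> x * iid_expectation R \<pi> n (\<lambda>xs. g (x # xs)))"
proof -
  let ?L = "{xs. set xs \<subseteq> R \<and> length xs = n}"
  have "iid_expectation R \<pi> (Suc n) g = (\<Sum>(xs, x) \<in> ?L \<times> R. \<pi> x * (prod_list (map \<pi> xs) * g (x # xs)))"
    unfolding iid_expectation_def lists_length_Suc_eq
    by (subst sum.reindex) (auto simp: inj_on_def mult.assoc intro!: sum.cong)
  also have "\<dots> = (\<Sum>xs\<in>?L. \<Sum>x\<in>R. \<pi> x * (prod_list (map \<pi> xs) * g (x # xs)))"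
    by (rule sum.cartesian_product[symmetric])
  also have "\<dots> = (\<Sum>x\<in>R. \<pi> x * iid_expectation R \<pi> n (\<lambda>xs. g (x # xs)))"
    by (subst sum.swap) (simp add: iid_expectation_def sum_distrib_left)
  finally show ?thesis .
qed

lemma iid_expectation_add:
  "iid_expectation R \<pi> n (\<lambda>xs. g xs + h xs) = iid_expectation R \<pi> n g + iid_expectation R \<pi> n h"
  by (simp add: iid_expectation_def distrib_left sum.distrib)

lemma iid_expectation_cmult:
  "iid_expectation R \<pi> n (\<lambda>xs. c * g xs) = c * iid_expectation R \<pi> n g"
  by (simp add: iid_expectation_def sum_distrib_left mult.left_commute)

lemma iid_expectation_sum:
  "iid_expectation R \<pi> n (\<lambda>xs. \<Sum>i\<in>I. h i xs) = (\<Sum>i\<in>I. iid_expectation R \<pi> n (h i))"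
  unfolding iid_expectation_def by (subst sum.swap) (simp add: sum_distrib_left)

lemma iid_expectation_const:
  assumes "finite R" "(\<Sum>x\<in>R. \<pi> x) = 1"
  shows "iid_expectation R \<pi> n (\<lambda>_. c) = c"
  by (induction n) (simp_all add: iid_expectation_Suc assms sum_distrib_right[symmetric])

lemma iid_expectation_mono:
  assumes "\<And>x. x \<in> R \<Longrightarrow> 0 \<le> \<pi> x"
    and "\<And>xs. set xs \<subseteq> R \<Longrightarrow> length xs = n \<Longrightarrow> g xs \<le> h xs"
  shows "iid_expectation R \<pi> n g \<le> iid_expectation R \<pi> n h"
  unfolding iid_expectation_def
proof (rule sum_mono)
  fix xs assume "xs \<in> {xs. set xs \<subseteq> R \<and> length xs = n}"
  moreover from this have "0 \<le> prod_list (map \<pi> xs)"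
    using assms(1) by (intro prod_list_nonneg) auto
  ultimately show "prod_list (map \<pi> xs) * g xs \<le> prod_list (map \<pi> xs) * h xs"
    using assms(2) by (auto intro: mult_left_mono)
qed

lemma weighted_sum_add_const:
  assumes "(\<Sum>x\<in>R. \<pi> x) = 1"
  shows "(\<Sum>x\<in>R. \<pi> x * (b x + c)) = (\<Sum>x\<in>R. \<pi> x * b x) + (c :: real)"
  by (simp add: distrib_left sum.distrib assms flip: sum_distrib_right)

lemma iid_expectation_sum_list:
  assumes "finite R" "(\<Sum>x\<in>R. \<pi> x) = 1"
  shows "iid_expectation R \<pi> n (\<lambda>xs. sum_list (map a xs)) = real n * (\<Sum>x\<in>R. \<pi> x * a x)"
proof (induction n)
  case (Suc n)
  let ?\<mu> = "\<Sum>x\<in>R. \<pi> x * a x"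
  have "iid_expectation R \<pi> n (\<lambda>xs. a x + sum_list (map a xs)) = a x + real n * ?\<mu>" for x
    by (simp add: iid_expectation_add iid_expectation_const assms Suc)
  then have "iid_expectation R \<pi> (Suc n) (\<lambda>xs. sum_list (map a xs))
      = (\<Sum>x\<in>R. \<pi> x * (a x + real n * ?\<mu>))"
    by (simp only: iid_expectation_Suc[OF assms(1)] list.map sum_list.Cons)
  also have "\<dots> = real (Suc n) * ?\<mu>"
    unfolding weighted_sum_add_const[OF assms(2)] by (simp add: algebra_simps)
  finally show ?case .
qed simp

lemma iid_expectation_sum_list_square:
  assumes "finite R" "(\<Sum>x\<in>R. \<pi> x) = 1" and centered: "(\<Sum>x\<in>R. \<pi> x * a x) = 0"
  shows "iid_expectation R \<pi> n (\<lambda>xs. (sum_list (map a xs))\<^sup>2) = real n * (\<Sum>x\<in>R. \<pi> x * (a x)\<^sup>2)"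
proof (induction n)
  case (Suc n)
  let ?S = "\<lambda>xs. sum_list (map a xs)" and ?V = "\<Sum>x\<in>R. \<pi> x * (a x)\<^sup>2"
  have "iid_expectation R \<pi> n (\<lambda>xs. (a x + ?S xs)\<^sup>2) = (a x)\<^sup>2 + real n * ?V" for x
  proof -
    have "(\<lambda>xs. (a x + ?S xs)\<^sup>2) = (\<lambda>xs. (a x)\<^sup>2 + ((2 * a x) * ?S xs + (?S xs)\<^sup>2))"
      by (simp add: power2_eq_square algebra_simps)
    then show ?thesis
      using Suc iid_expectation_sum_list[OF assms(1,2), of n a] centered
      by (simp add: iid_expectation_add iid_expectation_cmult iid_expectation_const assms(1,2))
  qed
  then have "iid_expectation R \<pi> (Suc n) (\<lambda>xs. (?S xs)\<^sup>2) = (\<Sum>x\<in>R. \<pi> x * ((a x)\<^sup>2 + real n * ?V))"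
    by (simp only: iid_expectation_Suc[OF assms(1)] list.map sum_list.Cons)
  also have "\<dots> = real (Suc n) * ?V"
    unfolding weighted_sum_add_const[OF assms(2)] by (simp add: algebra_simps)
  finally show ?case .
qed simp

lemma iid_chebyshev:
  assumes "finite R" "\<And>x. x \<in> R \<Longrightarrow> 0 \<le> \<pi> x" "(\<Sum>x\<in>R. \<pi> x) = 1"
    and "(\<Sum>x\<in>R. \<pi> x * a x) = 0" and "0 < c"
  shows "iid_expectation R \<pi> n (\<lambda>xs. of_bool (c \<le> \<bar>sum_list (map a xs)\<bar>))
           \<le> real n * (\<Sum>x\<in>R. \<pi> x * (a x)\<^sup>2) / c\<^sup>2"
proof -
  have "of_bool (c \<le> \<bar>s\<bar>) \<le> (1 / c\<^sup>2) * s\<^sup>2" for s :: real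
    using \<open>0 < c\<close> by (auto simp: field_simps abs_le_square_iff[symmetric])
  then have "iid_expectation R \<pi> n (\<lambda>xs. of_bool (c \<le> \<bar>sum_list (map a xs)\<bar>))
      \<le> iid_expectation R \<pi> n (\<lambda>xs. (1 / c\<^sup>2) * (sum_list (map a xs))\<^sup>2)"
    by (intro iid_expectation_mono assms(2))
  also have "\<dots> = (1 / c\<^sup>2) * (real n * (\<Sum>x\<in>R. \<pi> x * (a x)\<^sup>2))"
    by (simp only: iid_expectation_cmult iid_expectation_sum_list_square assms(1,3,4))
  finally show ?thesis
    by simp
qed

lemma iid_frequency_deviation_le:
  assumes "finite R" "\<And>x. x \<in> R \<Longrightarrow> 0 \<le> \<pi> x" "(\<Sum>x\<in>R. \<pi> x) = 1"
    and "p \<in> R" "0 < \<epsilon>" "0 < n"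
  shows "iid_expectation R \<pi> n (\<lambda>xs. of_bool (\<epsilon> \<le> \<bar>real (count_list xs p) / real n - \<pi> p\<bar>))
           \<le> 1 / (real n * \<epsilon>\<^sup>2)"
proof -
  define a where "a x = of_bool (x = p) - \<pi> p" for x
  have sum_list_a: "sum_list (map a xs) = real (count_list xs p) - real (length xs) * \<pi> p" for xs
    by (induction xs) (auto simp: a_def algebra_simps)
  have centered: "(\<Sum>x\<in>R. \<pi> x * a x) = 0"
    using assms(1,3,4) by (simp add: a_def right_diff_distrib sum_subtractf flip: sum_distrib_right)
  have "\<pi> p \<le> 1"
    using member_le_sum[of p R \<pi>] assms(1-4) by simp
  then have "\<pi> x * (a x)\<^sup>2 \<le> \<pi> x" if "x \<in> R" for x
    using assms(2)[OF that] assms(2)[OF assms(4)]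
    by (intro mult_left_le) (auto simp: a_def abs_square_le_1)
  then have variance: "(\<Sum>x\<in>R. \<pi> x * (a x)\<^sup>2) \<le> 1"
    using sum_mono[of R "\<lambda>x. \<pi> x * (a x)\<^sup>2" \<pi>] assms(3) by simp
  have "iid_expectation R \<pi> n (\<lambda>xs. of_bool (\<epsilon> \<le> \<bar>real (count_list xs p) / real n - \<pi> p\<bar>))
      \<le> iid_expectation R \<pi> n (\<lambda>xs. of_bool (real n * \<epsilon> \<le> \<bar>sum_list (map a xs)\<bar>))"
  proof (rule iid_expectation_mono[OF assms(2)])
    fix xs :: "'a list" assume "length xs = n"
    then have "real (count_list xs p) / real n - \<pi> p = sum_list (map a xs) / real n"
      using \<open>0 < n\<close> by (simp add: sum_list_a field_simps)
    then show "of_bool (\<epsilon> \<le> \<bar>real (count_list xs p) / real n - \<pi> p\<bar>)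
        \<le> (of_bool (real n * \<epsilon> \<le> \<bar>sum_list (map a xs)\<bar>) :: real)"
      using \<open>0 < n\<close> by (simp add: abs_divide le_divide_eq mult.commute)
  qed
  also have "\<dots> \<le> real n * (\<Sum>x\<in>R. \<pi> x * (a x)\<^sup>2) / (real n * \<epsilon>)\<^sup>2"
    using assms(5,6) by (intro iid_chebyshev assms(1-3) centered) auto
  also have "\<dots> \<le> real n * 1 / (real n * \<epsilon>)\<^sup>2"
    using variance by (intro divide_right_mono mult_left_mono) auto
  also have "\<dots> = 1 / (real n * \<epsilon>\<^sup>2)"
    using assms(6) by (simp add: power2_eq_square)
  finally show ?thesis .
qed

lemma finite_rankings: "finite (rankings m)"
  by (simp add: rankings_def)

lemma card_rankings: "card (rankings m) = fact m"
  by (simp add: rankings_def)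

lemma discrete_profile_iff:
  "discrete_profile m n P \<longleftrightarrow> 0 < n \<and> length P = n \<and> set P \<subseteq> rankings m"
  unfolding discrete_profile_def set_conv_nth by (auto simp: Suc_le_eq)

lemma disc_weights_eq_count_list: "disc_weights P p = real (count_list P p)"
  by (simp add: disc_weights_def count_list_eq_length_filter length_filter_conv_card eq_commute)

lemma total_weight_disc_weights:
  "set P \<subseteq> rankings m \<Longrightarrow> total_weight m (disc_weights P) = real (length P)"
  by (simp add: total_weight_def disc_weights_eq_count_list finite_rankings sum_count_set
      flip: of_nat_sum)

lemma cont_profile_disc_weights:
  assumes "set P \<subseteq> rankings m" "P \<noteq> []"
  shows "cont_profile m (disc_weights P)"
  using assms by (auto simp: cont_profile_def total_weight_disc_weights disc_weights_eq_count_list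
      count_list_0_iff)

lemma total_weight_normalize:
  "total_weight m w \<noteq> 0 \<Longrightarrow> total_weight m (normalize m w) = 1"
  by (simp add: total_weight_def normalize_def flip: sum_divide_distrib)

lemma cont_profile_normalize:
  "cont_profile m w \<Longrightarrow> cont_profile m (normalize m w)"
  by (simp add: cont_profile_def total_weight_normalize) (simp add: normalize_def)

lemma disc_weights_less_imp_voter_left:
  assumes "length Q = length P" and "disc_weights Q p < disc_weights P p"
  obtains v where "v < length P" "P ! v = p" "Q ! v \<noteq> p"
proof -
  have "\<not> {v. v < length P \<and> P ! v = p} \<subseteq> {v. v < length Q \<and> Q ! v = p}"
  proof
    assume "{v. v < length P \<and> P ! v = p} \<subseteq> {v. v < length Q \<and> Q ! v = p}"
    then have "card {v. v < length P \<and> P ! v = p} \<le> card {v. v < length Q \<and> Q ! v = p}"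
      by (intro card_mono) auto
    then show False
      using assms(2) by (simp add: disc_weights_def)
  qed
  then show ?thesis
    using assms(1) that by auto
qed

lemma CM_cont_normalize_if_CM_disc:
  assumes hom: "homogeneous m fd fc" and P: "discrete_profile m n P" and "CM_disc m fd P"
  shows "CM_cont m fc (normalize m (disc_weights P))"
proof -
  obtain Q where Q: "discrete_profile m (length P) Q" and "fd Q \<noteq> fd P"
    and movers_gain: "\<forall>v < length P. Q ! v \<noteq> P ! v \<longrightarrow> prefers (P ! v) (fd Q) (fd P)"
    using \<open>CM_disc m fd P\<close> unfolding CM_disc_def by blast
  let ?wP = "normalize m (disc_weights P)" and ?wQ = "normalize m (disc_weights Q)"
  have "0 < n" "length P = n" "set P \<subseteq> rankings m"
    and "length Q = n" "set Q \<subseteq> rankings m"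
    using P Q by (auto simp: discrete_profile_iff)
  then have "total_weight m (disc_weights P) = n" "total_weight m (disc_weights Q) = n"
    by (simp_all add: total_weight_disc_weights)
  have "fc ?wP = fd P" "fc ?wQ = fd Q"
    using hom P Q by (simp_all add: homogeneous_def)
  have "prefers p (fc ?wQ) (fc ?wP)" if "?wQ p < ?wP p" for p
  proof -
    from that have "disc_weights Q p < disc_weights P p"
      using \<open>total_weight m (disc_weights P) = n\<close> \<open>total_weight m (disc_weights Q) = n\<close> \<open>0 < n\<close>
      by (simp add: normalize_def divide_less_cancel)
    then obtain v where "v < length P" "P ! v = p" "Q ! v \<noteq> p"
      using \<open>length P = n\<close> \<open>length Q = n\<close> disc_weights_less_imp_voter_left by metis
    then show ?thesis
      using movers_gain \<open>fc ?wP = fd P\<close> \<open>fc ?wQ = fd Q\<close> by auto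
  qed
  moreover have "cont_profile m ?wQ"
    using \<open>length Q = n\<close> \<open>set Q \<subseteq> rankings m\<close> \<open>0 < n\<close>
    by (intro cont_profile_normalize cont_profile_disc_weights) auto
  moreover have "total_weight m ?wQ = total_weight m ?wP"
    using \<open>total_weight m (disc_weights P) = n\<close> \<open>total_weight m (disc_weights Q) = n\<close> \<open>0 < n\<close>
    by (simp add: total_weight_normalize)
  ultimately show ?thesis
    unfolding CM_cont_def using \<open>fd Q \<noteq> fd P\<close> \<open>fc ?wP = fd P\<close> \<open>fc ?wQ = fd Q\<close> by metis
qed

lemma pc_weight_nonneg: "0 \<le> \<theta> \<Longrightarrow> \<theta> \<le> 1 \<Longrightarrow> 0 \<le> pc_weight m \<theta> p"
  by (simp add: pc_weight_def)

lemma sum_pc_weight: "(\<Sum>p\<in>rankings m. pc_weight m \<theta> p) = 1"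
proof -
  define \<iota> where "\<iota> = [1..<m+1]"
  have "\<iota> \<in> rankings m"
    by (auto simp: \<iota>_def rankings_def permutations_of_set_def)
  have "(\<Sum>p\<in>rankings m. pc_weight m \<theta> p)
      = (\<Sum>p\<in>rankings m. (if p = \<iota> then \<theta> else 0) + (1 - \<theta>) / fact m)"
    unfolding pc_weight_def \<iota>_def[symmetric] by (intro sum.cong) auto
  also have "\<dots> = \<theta> + fact m * ((1 - \<theta>) / fact m)"
    using \<open>\<iota> \<in> rankings m\<close> by (simp add: sum.distrib finite_rankings card_rankings)
  finally show ?thesis
    by simp
qed

lemma CM_rate_nonneg: "0 \<le> \<theta> \<Longrightarrow> \<theta> \<le> 1 \<Longrightarrow> 0 \<le> CM_rate fd m n \<theta>"
  unfolding CM_rate_def by (intro sum_nonneg prod_nonneg pc_weight_nonneg)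

lemma CM_rate_eq_iid_expectation:
  assumes "0 < n"
  shows "CM_rate fd m n \<theta>
    = iid_expectation (rankings m) (pc_weight m \<theta>) n (\<lambda>P. of_bool (CM_disc m fd P))"
proof -
  let ?L = "{P. set P \<subseteq> rankings m \<and> length P = n}" and ?\<pi> = "pc_weight m \<theta>"
  have "{P. discrete_profile m n P \<and> CM_disc m fd P} = {P \<in> ?L. CM_disc m fd P}"
    using assms by (auto simp: discrete_profile_iff)
  then have "CM_rate fd m n \<theta> = (\<Sum>P\<in>{P \<in> ?L. CM_disc m fd P}. prod_list (map ?\<pi> P))"
    unfolding CM_rate_def by (intro sum.cong) (auto simp: prod.list_conv_set_nth atLeast0LessThan)
  also have "\<dots> = (\<Sum>P\<in>?L. if CM_disc m fd P then prod_list (map ?\<pi> P) else 0)"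
    by (intro sum.inter_filter finite_lists_length_eq finite_rankings)
  also have "\<dots> = iid_expectation (rankings m) ?\<pi> n (\<lambda>P. of_bool (CM_disc m fd P))"
    unfolding iid_expectation_def by (intro sum.cong) auto
  finally show ?thesis .
qed

lemma CM_disc_imp_frequency_deviation:
  assumes hom: "homogeneous m fd fc" and P: "discrete_profile m n P" and "CM_disc m fd P"
    and stable: "\<And>q. cont_profile m q \<Longrightarrow> total_weight m q = 1 \<Longrightarrow>
      (\<forall>p\<in>rankings m. \<bar>q p - expected_profile m \<theta> p\<bar> < \<epsilon>) \<Longrightarrow> \<not> CM_cont m fc q"
  obtains p where "p \<in> rankings m" "\<epsilon> \<le> \<bar>real (count_list P p) / real n - pc_weight m \<theta> p\<bar>"
proof -
  let ?q = "normalize m (disc_weights P)"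
  have "0 < n" "length P = n" "set P \<subseteq> rankings m"
    using P by (auto simp: discrete_profile_iff)
  then have "cont_profile m ?q" "total_weight m ?q = 1"
    by (auto intro!: cont_profile_normalize cont_profile_disc_weights
        simp: total_weight_normalize total_weight_disc_weights)
  moreover have "CM_cont m fc ?q"
    using CM_cont_normalize_if_CM_disc[OF hom P \<open>CM_disc m fd P\<close>] .
  ultimately have "\<not> (\<forall>p\<in>rankings m. \<bar>?q p - pc_weight m \<theta> p\<bar> < \<epsilon>)"
    using stable unfolding expected_profile_def by blast
  moreover have "?q p = real (count_list P p) / real n" for p
    using \<open>length P = n\<close> \<open>set P \<subseteq> rankings m\<close>
    by (simp add: normalize_def total_weight_disc_weights disc_weights_eq_count_list)
  ultimately have "\<exists>p\<in>rankings m. \<epsilon> \<le> \<bar>real (count_list P p) / real n - pc_weight m \<theta> p\<bar>"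
    by (simp add: not_less)
  then show ?thesis
    using that by blast
qed

lemma CM_rate_le:
  assumes hom: "homogeneous m fd fc" and "0 \<le> \<theta>" "\<theta> \<le> 1" "0 < \<epsilon>" "0 < n"
    and stable: "\<And>q. cont_profile m q \<Longrightarrow> total_weight m q = 1 \<Longrightarrow>
      (\<forall>p\<in>rankings m. \<bar>q p - expected_profile m \<theta> p\<bar> < \<epsilon>) \<Longrightarrow> \<not> CM_cont m fc q"
  shows "CM_rate fd m n \<theta> \<le> fact m / \<epsilon>\<^sup>2 / real n"
proof -
  let ?R = "rankings m" and ?\<pi> = "pc_weight m \<theta>"
  let ?deviates = "\<lambda>p P. of_bool (\<epsilon> \<le> \<bar>real (count_list P p) / real n - ?\<pi> p\<bar>) :: real"
  have "of_bool (CM_disc m fd P) \<le> (\<Sum>p\<in>?R. ?deviates p P)"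
    if "set P \<subseteq> ?R" "length P = n" for P
  proof (cases "CM_disc m fd P")
    case True
    have "discrete_profile m n P"
      using that \<open>0 < n\<close> by (simp add: discrete_profile_iff)
    then obtain p where "p \<in> ?R" "\<epsilon> \<le> \<bar>real (count_list P p) / real n - ?\<pi> p\<bar>"
      using CM_disc_imp_frequency_deviation[where \<theta> = \<theta> and \<epsilon> = \<epsilon>, OF hom _ True stable] by blast
    then have "?deviates p P = 1"
      by simp
    then show ?thesis
      using member_le_sum[of p ?R "\<lambda>p. ?deviates p P"] \<open>p \<in> ?R\<close> finite_rankings True by simp
  qed (simp add: sum_nonneg)
  then have "CM_rate fd m n \<theta> \<le> iid_expectation ?R ?\<pi> n (\<lambda>P. \<Sum>p\<in>?R. ?deviates p P)"
    unfolding CM_rate_eq_iid_expectation[OF \<open>0 < n\<close>]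
    using assms(2,3) by (intro iid_expectation_mono pc_weight_nonneg)
  also have "\<dots> = (\<Sum>p\<in>?R. iid_expectation ?R ?\<pi> n (?deviates p))"
    by (rule iid_expectation_sum)
  also have "\<dots> \<le> (\<Sum>p\<in>?R. 1 / (real n * \<epsilon>\<^sup>2))"
    using assms(2-5)
    by (intro sum_mono iid_frequency_deviation_le finite_rankings pc_weight_nonneg sum_pc_weight)
  also have "\<dots> = fact m / \<epsilon>\<^sup>2 / real n"
    by (simp add: card_rankings)
  finally show ?thesis .
qed

theorem lemma3p1:
  fixes m :: nat and \<theta> :: real
    and fd :: "nat list list \<Rightarrow> nat" and fc :: "(nat list \<Rightarrow> real) \<Rightarrow> nat"
  assumes "m \<ge> 1" and "0 < \<theta>" and "\<theta> \<le> 1"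
    and "voting_rule m fd fc" and "homogeneous m fd fc"
    and "\<exists>\<epsilon>>0. \<forall>q. cont_profile m q \<and> total_weight m q = 1 \<and>
            (\<forall>p\<in>rankings m. \<bar>q p - expected_profile m \<theta> p\<bar> < \<epsilon>)
            \<longrightarrow> \<not> CM_cont m fc q"
  shows "(\<lambda>n. CM_rate fd m n \<theta>) \<longlonglongrightarrow> 0"
proof -
  obtain \<epsilon> where "0 < \<epsilon>" and stable: "\<And>q. cont_profile m q \<Longrightarrow> total_weight m q = 1 \<Longrightarrow>
      (\<forall>p\<in>rankings m. \<bar>q p - expected_profile m \<theta> p\<bar> < \<epsilon>) \<Longrightarrow> \<not> CM_cont m fc q"
    using assms(6) by blast
  have "\<forall>\<^sub>F n in sequentially. CM_rate fd m n \<theta> \<le> fact m / \<epsilon>\<^sup>2 / real n"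
    using eventually_gt_at_top[of 0]
  proof eventually_elim
    case (elim n)
    show ?case
      using assms(2,3,5) \<open>0 < \<epsilon>\<close> elim stable by (intro CM_rate_le) auto
  qed
  moreover have "\<forall>\<^sub>F n in sequentially. 0 \<le> CM_rate fd m n \<theta>"
    using assms(2,3) by (simp add: CM_rate_nonneg)
  ultimately show ?thesis
    by (intro tendsto_sandwich[OF _ _ tendsto_const lim_const_over_n])
qed

end
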